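(* Let $\alpha\in(0,1)$ and let $a:[0,+\infty)\to\mathbb{R}$ be continuous. Assume that there exists $T>0$ such that $\int_{T}^{+\infty}s^{1+\alpha}|a(s)|\,ds<+\infty$ and \[ \frac{\max\{1,T^{\alpha}\}}{\Gamma(1+\alpha)}\left[\int_{0}^{T}|a(s)|\,ds+\int_{T}^{+\infty}s^{\alpha}|a(s)|\,ds\right]=k<1 . \] Then, for any given real numbers $c,b$ with $c^{2}+b^{2}>0$, the fractional differential equation \[ {}_{0}D_{t}^{\alpha}(x')(t)+a(t)x(t)=0,\qquad t>0, \] has a solution $x\in C([0,+\infty),\mathbb{R})$ with the asymptotic formula \[ x(t)=c+bt^{\alpha}+O(t^{\alpha-1})=c+bt^{\alpha}+o(1)\quad\text{as }t\to+\infty . \]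
   Context: $\Gamma$ is Euler's Gamma function. For a function $f\in C((0,+\infty),\mathbb{R})$ with $\lim_{t\searrow 0}t^{1-\alpha}f(t)\in\mathbb{R}$, the Riemann–Liouville derivative of order $\alpha\in(0,1)$ is $({}_{0}D_{t}^{\alpha}f)(t)=\frac{1}{\Gamma(1-\alpha)}\frac{d}{dt}\left[\int_{0}^{t}\frac{f(s)}{(t-s)^{\alpha}}\,ds\right]$, $t>0$. The operator in the equation is ${}_{0}D_{t}^{\alpha}\circ\frac{d}{dt}$, i.e. the Riemann–Liouville derivative of $x'$. (In the paper the constants $c,b$ are denoted $a,b$; they are renamed here to avoid a clash with the coefficient $a(t)$.) *)

theory Defs
  imports "HOL-Analysis.Analysis" "HOL-Library.Landau_Symbols"
begin

definition RL_integral_part :: "real \<Rightarrow> (real \<Rightarrow> real) \<Rightarrow> real \<Rightarrow> real" where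
  "RL_integral_part \<alpha> f \<tau> = integral {0..\<tau>} (\<lambda>s. f s / (\<tau> - s) powr \<alpha>)"

definition RL_deriv :: "real \<Rightarrow> (real \<Rightarrow> real) \<Rightarrow> real \<Rightarrow> real" where
  "RL_deriv \<alpha> f t = deriv (RL_integral_part \<alpha> f) t / Gamma (1 - \<alpha>)"

definition RL_admissible :: "real \<Rightarrow> (real \<Rightarrow> real) \<Rightarrow> bool" where
  "RL_admissible \<alpha> f \<longleftrightarrow>
     continuous_on {0<..} f \<and>
     (\<exists>L. ((\<lambda>t. t powr (1 - \<alpha>) * f t) \<longlongrightarrow> L) (at_right 0)) \<and>
     (\<forall>t>0. (\<lambda>s. f s / (t - s) powr \<alpha>) integrable_on {0..t} \<and>
             RL_integral_part \<alpha> f differentiable (at t))"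

definition is_solution :: "real \<Rightarrow> (real \<Rightarrow> real) \<Rightarrow> (real \<Rightarrow> real) \<Rightarrow> bool" where
  "is_solution \<alpha> a x \<longleftrightarrow>
     continuous_on {0..} x \<and>
     (\<forall>t>0. x differentiable (at t)) \<and>
     RL_admissible \<alpha> (deriv x) \<and>
     (\<forall>t>0. RL_deriv \<alpha> (deriv x) t + a t * x t = 0)"

end

theory Submission
  imports Defs
begin

text \<open>
  Let \<open>w(t) = 1 + t\<^sup>\<alpha>\<close>. On continuous \<open>y\<close> with \<open>y/w\<close> bounded consider
  \<open>(S y)(t) = c + b t\<^sup>\<alpha> + \<Gamma>(1+\<alpha>)\<^sup>-\<^sup>1 \<integral>\<^sub>0\<^sup>\<infinity> (t\<^sup>\<alpha> - (t-s)\<^sub>+\<^sup>\<alpha>) a(s) y(s) ds\<close>.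
  Subadditivity of \<open>t\<^sup>\<alpha>\<close> gives \<open>0 \<le> t\<^sup>\<alpha> - (t-s)\<^sub>+\<^sup>\<alpha> \<le> s\<^sup>\<alpha>\<close> and
  \<open>(t\<^sup>\<alpha> - (t-s)\<^sub>+\<^sup>\<alpha>) w(s) \<le> s\<^sup>\<alpha> w(t)\<close>, so \<open>S\<close> is a contraction for the weighted
  sup norm with constant \<open>\<Gamma>(1+\<alpha>)\<^sup>-\<^sup>1 \<integral>\<^sub>0\<^sup>\<infinity> s\<^sup>\<alpha>|a| \<le> k < 1\<close>, and has a fixed point \<open>x\<close>.
  Writing \<open>x\<close> as \<open>c + b t\<^sup>\<alpha> + (A t\<^sup>\<alpha> - \<integral>\<^sub>0\<^sup>t (t-s)\<^sup>\<alpha> a x)/\<Gamma>(1+\<alpha>)\<close> shows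
  \<open>x' = D t\<^sup>\<alpha>\<^sup>-\<^sup>1 - I\<^sup>\<alpha>(a x)\<close>; the Riemann--Liouville integral of order \<open>1-\<alpha>\<close> maps
  \<open>t\<^sup>\<alpha>\<^sup>-\<^sup>1\<close> to a constant and \<open>I\<^sup>\<alpha>(a x)\<close> to \<open>\<integral>\<^sub>0\<^sup>t a x\<close> (semigroup law, by Fubini and
  the Beta integral), whence \<open>D\<^sup>\<alpha> x' = -a x\<close>. Finally
  \<open>t\<^sup>\<alpha> - (t-s)\<^sub>+\<^sup>\<alpha> \<le> s t\<^sup>\<alpha>\<^sup>-\<^sup>1\<close> and \<open>\<integral> s\<^sup>1\<^sup>+\<^sup>\<alpha>|a| < \<infinity>\<close> bound the remainder by \<open>O(t\<^sup>\<alpha>\<^sup>-\<^sup>1)\<close>.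
\<close>

section \<open>Riemann--Liouville integrals\<close>

lemma set_integrable_lborel_if_absolutely_integrable:
  fixes f :: "real \<Rightarrow> real"
  assumes "f \<in> borel_measurable borel" "S \<in> sets borel" "f absolutely_integrable_on S"
  shows "set_integrable lborel S f"
  using assms unfolding set_integrable_def
  by (subst (asm) integrable_completion) auto

lemma bounded_on_interval_if_continuous:
  fixes g :: "real \<Rightarrow> real"
  assumes "continuous_on UNIV g"
  obtains M where "\<And>s. s \<in> {a..b} \<Longrightarrow> \<bar>g s\<bar> \<le> M"
proof -
  have "bounded (g ` {a..b})"
    by (intro compact_imp_bounded compact_continuous_image continuous_on_subset[OF assms]) auto
  then obtain M where "\<forall>x\<in>g ` {a..b}. norm x \<le> M" using bounded_iff by blast
  then show ?thesis by (intro that[of M]) auto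
qed

lemma Beta_real_pos: "0 < a \<Longrightarrow> 0 < b \<Longrightarrow> 0 < Beta (a::real) b"
  by (simp add: Beta_def Gamma_real_pos)

lemma Beta_real_1_right:
  fixes a :: real
  assumes a: "0 < a"
  shows "Beta a 1 = 1 / a"
proof -
  have "a \<notin> \<int>\<^sub>\<le>\<^sub>0" using a nonpos_Ints_nonpos by fastforce
  moreover have "Gamma a \<noteq> 0" using Gamma_real_pos[OF a] by simp
  ultimately show ?thesis
    using Gamma_plus1[of a] a by (simp add: Beta_def field_simps)
qed

lemma has_integral_Beta_interval:
  fixes p q s t :: real
  assumes p: "0 < p" and q: "0 < q" and st: "s < t"
  shows "((\<lambda>u. (t-u) powr (p-1) * (u-s) powr (q-1)) has_integral Beta q p * (t-s) powr (p+q-1)) {s..t}"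
proof -
  define r where "r = t - s"
  have r: "r > 0" using st unfolding r_def by linarith
  have B: "((\<lambda>w. w powr (q-1) * (1-w) powr (p-1)) has_integral Beta q p) (cbox 0 1)"
    using has_integral_Beta_real[OF q p] by simp
  have "((\<lambda>u. (\<lambda>w. w powr (q-1) * (1-w) powr (p-1)) ((1/r) *\<^sub>R u + (-s/r))) has_integral
      (Beta q p /\<^sub>R (1/r) ^ DIM(real))) (cbox ((0 - (-s/r)) /\<^sub>R (1/r)) ((1 - (-s/r)) /\<^sub>R (1/r)))"
    by (rule has_integral_affinity'[OF B]) (use r in auto)
  also have "cbox ((0 - (-s/r)) /\<^sub>R (1/r)) ((1 - (-s/r)) /\<^sub>R (1/r)) = {s..t}"
    using r by (simp add: r_def field_simps)
  finally have I: "((\<lambda>u. ((u-s)/r) powr (q-1) * (1-(u-s)/r) powr (p-1)) has_integral r * Beta q p) {s..t}"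
    using r by (simp add: field_simps)
  have "((\<lambda>u. r powr (p+q-2) * (((u-s)/r) powr (q-1) * (1-(u-s)/r) powr (p-1))) has_integral
      r powr (p+q-2) * (r * Beta q p)) {s..t}"
    by (rule has_integral_mult_right[OF I])
  moreover have "r powr (p+q-2) * (r * Beta q p) = Beta q p * (t-s) powr (p+q-1)"
    using r powr_add[of r "p+q-2" 1] by (simp add: r_def)
  moreover have "r powr (p+q-2) * (((u-s)/r) powr (q-1) * (1-(u-s)/r) powr (p-1))
      = (t-u) powr (p-1) * (u-s) powr (q-1)" if "u \<in> {s..t}" for u
  proof -
    have "1-(u-s)/r = (t-u)/r" using r by (simp add: r_def field_simps)
    moreover have "((u-s)/r) powr (q-1) = (u-s) powr (q-1) / r powr (q-1)"
      using that r by (simp add: powr_divide)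
    moreover have "((t-u)/r) powr (p-1) = (t-u) powr (p-1) / r powr (p-1)"
      using that r by (simp add: powr_divide)
    moreover have "r powr (p+q-2) = r powr (q-1) * r powr (p-1)"
      using powr_add[of r "q-1" "p-1"] by (simp add: algebra_simps)
    ultimately show ?thesis using r by (simp add: field_simps)
  qed
  ultimately show ?thesis
    by (metis (no_types, lifting) has_integral_eq)
qed

lemma set_integral_Beta_interval:
  fixes p q s t :: real
  assumes "0 < p" "0 < q" "s < t"
  shows "set_integrable lborel {s..t} (\<lambda>u. (t-u) powr (p-1) * (u-s) powr (q-1))"
    and "(LINT u:{s..t}|lborel. (t-u) powr (p-1) * (u-s) powr (q-1)) = Beta q p * (t-s) powr (p+q-1)"
proof -
  note hi = has_integral_Beta_interval[OF assms]
  have "(\<lambda>u. (t-u) powr (p-1) * (u-s) powr (q-1)) absolutely_integrable_on {s..t}"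
    using hi by (subst absolutely_integrable_on_iff_nonneg) (auto simp: integrable_on_def)
  then show si: "set_integrable lborel {s..t} (\<lambda>u. (t-u) powr (p-1) * (u-s) powr (q-1))"
    by (rule set_integrable_lborel_if_absolutely_integrable[rotated 2]) auto
  show "(LINT u:{s..t}|lborel. (t-u) powr (p-1) * (u-s) powr (q-1)) = Beta q p * (t-s) powr (p+q-1)"
    using set_borel_integral_eq_integral(2)[OF si] integral_unique[OF hi] by simp
qed

lemma has_integral_powr_kernel:
  fixes q u :: real
  assumes q: "0 < q" and u: "0 \<le> u"
  shows "((\<lambda>s. (u-s) powr (q-1)) has_integral u powr q / q) {0..u}"
proof -
  have "((\<lambda>x. x powr (q-1)) has_integral (u powr (q-1+1) / (q-1+1))) {0..u}"
    by (rule has_integral_powr_from_0) (use q u in auto)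
  then have "((\<lambda>x. (-x) powr (q-1)) has_integral u powr q / q) {-u..-0}"
    by (subst has_integral_reflect_real) simp
  from has_integral_shift_real_ivl[OF this, of "-u"] show ?thesis by simp
qed

lemma set_integrable_powr_kernel:
  fixes q u :: real and h :: "real \<Rightarrow> real"
  assumes q: "0 < q" and u: "0 \<le> u" and h: "continuous_on UNIV h"
  shows "set_integrable lborel {0..u} (\<lambda>s. (u-s) powr (q-1) * h s)"
proof -
  have [measurable]: "h \<in> borel_measurable borel" by (rule borel_measurable_continuous_onI[OF h])
  obtain M where M: "\<And>s. s \<in> {0..u} \<Longrightarrow> \<bar>h s\<bar> \<le> M"
    using bounded_on_interval_if_continuous[OF h] by blast
  have "(\<lambda>s. (u-s) powr (q-1)) absolutely_integrable_on {0..u}"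
    using has_integral_powr_kernel[OF q u]
    by (subst absolutely_integrable_on_iff_nonneg) (auto simp: integrable_on_def)
  then have "set_integrable lborel {0..u} (\<lambda>s. (u-s) powr (q-1))"
    by (rule set_integrable_lborel_if_absolutely_integrable[rotated 2]) auto
  then have "set_integrable lborel {0..u} (\<lambda>s. M * (u-s) powr (q-1))"
    by (rule set_integrable_mult_right)
  then show ?thesis
  proof (rule set_integrable_bound)
    show "set_borel_measurable lborel {0..u} (\<lambda>s. (u - s) powr (q - 1) * h s)"
      unfolding set_borel_measurable_def by measurable
    show "AE x in lborel. x \<in> {0..u} \<longrightarrow> norm ((u-x) powr (q-1) * h x) \<le> norm (M * (u-x) powr (q-1))"
    proof (intro AE_I2 impI)
      fix x assume "x \<in> {0..u}"
      then have "(u-x) powr (q-1) * \<bar>h x\<bar> \<le> (u-x) powr (q-1) * M"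
        using M by (intro mult_left_mono) auto
      also have "\<dots> \<le> (u-x) powr (q-1) * \<bar>M\<bar>" by (intro mult_left_mono) auto
      finally show "norm ((u-x) powr (q-1) * h x) \<le> norm (M * (u-x) powr (q-1))"
        by (simp add: abs_mult mult.commute)
    qed
  qed
qed

lemma powr_kernel_integrable:
  fixes q u :: real and h :: "real \<Rightarrow> real"
  assumes "0 < q" "0 \<le> u" "continuous_on UNIV h"
  shows "(\<lambda>s. (u-s) powr (q-1) * h s) integrable_on {0..u}"
  using set_borel_integral_eq_integral(1)[OF set_integrable_powr_kernel[OF assms]] .

text \<open>\<open>frac_conv q g\<close> is \<open>\<Gamma>(q)\<close> times the Riemann--Liouville integral of order \<open>q\<close> of \<open>g\<close>.\<close>

definition frac_conv :: "real \<Rightarrow> (real \<Rightarrow> real) \<Rightarrow> real \<Rightarrow> real" where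
  "frac_conv q g u = integral {0..u} (\<lambda>s. (u-s) powr (q-1) * g s)"

lemma abs_frac_conv_le:
  fixes q u M :: real and g :: "real \<Rightarrow> real"
  assumes q: "0 < q" and u: "0 \<le> u" and g: "continuous_on UNIV g"
    and M: "\<And>s. s \<in> {0..u} \<Longrightarrow> \<bar>g s\<bar> \<le> M"
  shows "\<bar>frac_conv q g u\<bar> \<le> M * (u powr q / q)"
proof -
  have hi: "((\<lambda>s. M * (u-s) powr (q-1)) has_integral M * (u powr q / q)) {0..u}"
    by (rule has_integral_mult_right[OF has_integral_powr_kernel[OF q u]])
  have "norm (integral {0..u} (\<lambda>s. (u-s) powr (q-1) * g s)) \<le> integral {0..u} (\<lambda>s. M * (u-s) powr (q-1))"
  proof (rule integral_norm_bound_integral)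
    show "(\<lambda>s. (u-s) powr (q-1) * g s) integrable_on {0..u}" by (rule powr_kernel_integrable[OF q u g])
    show "(\<lambda>s. M * (u-s) powr (q-1)) integrable_on {0..u}" using hi by (auto simp: integrable_on_def)
    fix x assume "x \<in> {0..u}"
    then have "(u-x) powr (q-1) * \<bar>g x\<bar> \<le> (u-x) powr (q-1) * M"
      using M by (intro mult_left_mono) auto
    then show "norm ((u-x) powr (q-1) * g x) \<le> M * (u-x) powr (q-1)"
      by (simp add: abs_mult mult.commute)
  qed
  then show ?thesis using integral_unique[OF hi] by (simp add: frac_conv_def)
qed

lemma frac_conv_rescale:
  fixes q u :: real and g :: "real \<Rightarrow> real"
  assumes q: "0 < q" and u: "0 < u" and g: "continuous_on UNIV g"
  shows "frac_conv q g u = u powr q * integral {0..1} (\<lambda>w. (1-w) powr (q-1) * g (u*w))"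
proof -
  have "((\<lambda>s. (u-s) powr (q-1) * g s) has_integral frac_conv q g u) (cbox 0 u)"
    using powr_kernel_integrable[OF q _ g, of u] u by (simp add: frac_conv_def has_integral_integral)
  from has_integral_affinity'[OF this u, of 0]
  have "((\<lambda>w. (u - u*w) powr (q-1) * g (u*w)) has_integral frac_conv q g u / u) {0..1}"
    using u by (simp add: divide_inverse mult.commute)
  moreover have "(u - u*w) powr (q-1) * g (u*w) = u powr (q-1) * ((1-w) powr (q-1) * g (u*w))"
    if "w \<in> {0..1}" for w
  proof -
    have "u - u*w = u * (1-w)" by (simp add: algebra_simps)
    then show ?thesis using that u by (simp add: powr_mult)
  qed
  ultimately have "((\<lambda>w. u powr (q-1) * ((1-w) powr (q-1) * g (u*w))) has_integral frac_conv q g u / u) {0..1}"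
    by (metis (no_types, lifting) has_integral_eq)
  then have "u powr (q-1) * integral {0..1} (\<lambda>w. (1-w) powr (q-1) * g (u*w)) = frac_conv q g u / u"
    using integral_unique integral_mult_right by metis
  moreover have "u * u powr (q-1) = u powr q" using u powr_add[of u 1 "q-1"] by simp
  ultimately show ?thesis using u by (simp add: field_simps mult.assoc[symmetric])
qed

lemma continuous_on_integral_powr_kernel_dilation:
  fixes q :: real and g :: "real \<Rightarrow> real"
  assumes q: "0 < q" and g: "continuous_on UNIV g"
  shows "continuous_on UNIV (\<lambda>u. integral {0..1} (\<lambda>w. (1-w) powr (q-1) * g (u*w)))"
proof (rule continuous_on_sequentiallyI)
  fix x :: "nat \<Rightarrow> real" and a assume x: "x \<longlonglongrightarrow> a"
  obtain B where B: "\<And>n. \<bar>x n\<bar> \<le> B"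
    using convergent_imp_bounded[OF x] by (auto simp: bounded_iff)
  obtain M where M: "\<And>s. s \<in> {-B..B} \<Longrightarrow> \<bar>g s\<bar> \<le> M"
    using bounded_on_interval_if_continuous[OF g] by blast
  have gc: "continuous_on UNIV (\<lambda>w. g (c*w))" for c
    by (auto intro!: continuous_on_compose2[OF g] continuous_intros)
  have hi: "((\<lambda>w. M * (1-w) powr (q-1)) has_integral M * (1 powr q / q)) {0..1}"
    by (rule has_integral_mult_right[OF has_integral_powr_kernel[OF q]]) simp
  show "(\<lambda>n. integral {0..1} (\<lambda>w. (1-w) powr (q-1) * g (x n*w))) \<longlonglongrightarrow>
        integral {0..1} (\<lambda>w. (1-w) powr (q-1) * g (a*w))"
  proof (rule dominated_convergence(2))
    show "(\<lambda>w. (1-w) powr (q-1) * g (x k*w)) integrable_on {0..1}" for k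
      using powr_kernel_integrable[OF q _ gc, of 1] by simp
    show "(\<lambda>w. M * (1-w) powr (q-1)) integrable_on {0..1}" using hi by (auto simp: integrable_on_def)
    fix k and w :: real assume w: "w \<in> {0..1}"
    have "\<bar>x k * w\<bar> \<le> B" using B[of k] w by (auto simp: abs_mult intro: order_trans[OF mult_right_le_one_le])
    then have "\<bar>g (x k * w)\<bar> \<le> M" using M[of "x k * w"] by (simp add: abs_le_iff)
    then show "norm ((1-w) powr (q-1) * g (x k*w)) \<le> M * (1-w) powr (q-1)"
      by (simp add: abs_mult mult_left_mono mult.commute[of M])
  next
    fix w :: real
    have "(\<lambda>k. g (x k * w)) \<longlonglongrightarrow> g (a * w)"
      by (rule isCont_tendsto_compose[of _ g]) (use g x in \<open>auto intro: tendsto_intros simp: continuous_on_eq_continuous_at\<close>)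
    then show "(\<lambda>k. (1-w) powr (q-1) * g (x k*w)) \<longlonglongrightarrow> (1-w) powr (q-1) * g (a*w)"
      by (intro tendsto_intros)
  qed
qed

lemma continuous_on_frac_conv:
  fixes q :: real and g :: "real \<Rightarrow> real"
  assumes q: "0 < q" and g: "continuous_on UNIV g"
  shows "continuous_on {0..} (frac_conv q g)"
proof -
  have "continuous_on {0..} (\<lambda>u. u powr q * integral {0..1} (\<lambda>w. (1-w) powr (q-1) * g (u*w)))"
    by (intro continuous_intros continuous_on_powr'
          continuous_on_subset[OF continuous_on_integral_powr_kernel_dilation[OF q g]])
       (use q in auto)
  moreover have "frac_conv q g u = u powr q * integral {0..1} (\<lambda>w. (1-w) powr (q-1) * g (u*w))"
    if "u \<in> {0..}" for u
    using that frac_conv_rescale[OF q _ g, of u] by (cases "u = 0") (auto simp: frac_conv_def)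
  ultimately show ?thesis by (metis (no_types, lifting) continuous_on_cong)
qed

lemma tendsto_powr_frac_conv_at_right_0:
  fixes q :: real and g :: "real \<Rightarrow> real"
  assumes q: "0 < q" and g: "continuous_on UNIV g"
  shows "((\<lambda>t. t powr (1-q) * frac_conv q g t) \<longlongrightarrow> 0) (at_right 0)"
proof -
  obtain M where M: "\<And>s. s \<in> {0..1} \<Longrightarrow> \<bar>g s\<bar> \<le> M"
    using bounded_on_interval_if_continuous[OF g] by blast
  have "\<forall>\<^sub>F t in at_right 0. 0 < t \<and> t < (1::real)"
    unfolding eventually_at_right_field by (intro exI[of _ 1]) auto
  then have "\<forall>\<^sub>F t in at_right 0. norm (t powr (1-q) * frac_conv q g t) \<le> M / q * t"
  proof eventually_elim
    case (elim t)
    then have "\<bar>frac_conv q g t\<bar> \<le> M * (t powr q / q)"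
      using M by (intro abs_frac_conv_le[OF q _ g]) auto
    then have "t powr (1-q) * \<bar>frac_conv q g t\<bar> \<le> t powr (1-q) * (M * (t powr q / q))"
      by (intro mult_left_mono) auto
    also have "\<dots> = M / q * t"
      using elim powr_add[of t "1-q" q] by (simp add: field_simps)
    finally show ?case by (simp add: abs_mult)
  qed
  moreover have "((\<lambda>t. M / q * t) \<longlongrightarrow> 0) (at_right 0)"
    by (rule tendsto_eq_intros) (auto intro: tendsto_intros)
  ultimately show ?thesis by (rule Lim_null_comparison)
qed

definition conv_integrand :: "real \<Rightarrow> real \<Rightarrow> real \<Rightarrow> (real \<Rightarrow> real) \<Rightarrow> real \<times> real \<Rightarrow> real" where
  "conv_integrand p q t h = (\<lambda>(s, u).
     if 0 \<le> s \<and> s \<le> u \<and> u \<le> t then (t-u) powr (p-1) * (u-s) powr (q-1) * h s else 0)"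

lemma borel_measurable_conv_integrand [measurable]:
  assumes "h \<in> borel_measurable borel"
  shows "conv_integrand p q t h \<in> borel_measurable (lborel \<Otimes>\<^sub>M lborel)"
  using assms unfolding conv_integrand_def by measurable

lemma conv_integrand_inner_u:
  fixes p q t s :: real and h :: "real \<Rightarrow> real"
  assumes p: "0 < p" and q: "0 < q"
  defines "G \<equiv> indicator {0..t} s * (Beta q p * (t-s) powr (p+q-1) * h s)"
  shows "integrable lborel (\<lambda>u. conv_integrand p q t h (s, u))"
    and "(LINT u|lborel. conv_integrand p q t h (s, u)) = G"
    and "(LINT u|lborel. \<bar>conv_integrand p q t h (s, u)\<bar>) = \<bar>G\<bar>"
proof -
  have "integrable lborel (\<lambda>u. conv_integrand p q t h (s, u)) \<and> (LINT u|lborel. conv_integrand p q t h (s, u)) = G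
      \<and> (LINT u|lborel. \<bar>conv_integrand p q t h (s, u)\<bar>) = \<bar>G\<bar>"
  proof (cases "0 \<le> s \<and> s < t")
    case True
    define k where "k = (\<lambda>u. indicator {s..t} u *\<^sub>R ((t-u) powr (p-1) * (u-s) powr (q-1)))"
    have "(\<lambda>u. conv_integrand p q t h (s, u)) = (\<lambda>u. h s * k u)"
      and "(\<lambda>u. \<bar>conv_integrand p q t h (s, u)\<bar>) = (\<lambda>u. \<bar>h s\<bar> * k u)"
      using True by (auto simp: conv_integrand_def k_def indicator_def fun_eq_iff abs_mult)
    moreover have "integrable lborel k" "(LINT u|lborel. k u) = Beta q p * (t-s) powr (p+q-1)"
      using set_integral_Beta_interval[OF p q, of s t] True
      unfolding set_integrable_def set_lebesgue_integral_def k_def by simp_all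
    moreover have "G = h s * (Beta q p * (t-s) powr (p+q-1))" "0 \<le> Beta q p * (t-s) powr (p+q-1)"
      using True Beta_real_pos[OF q p] by (simp_all add: G_def)
    moreover have "\<bar>Beta q p\<bar> = Beta q p" using Beta_real_pos[OF q p] by simp
    ultimately show ?thesis by (simp add: abs_mult)
  next
    case False
    then have "conv_integrand p q t h (s, u) = 0" for u
      by (cases "0 \<le> s \<and> s \<le> u \<and> u \<le> t") (auto simp: conv_integrand_def)
    moreover have "G = 0" using False by (auto simp: G_def indicator_def)
    ultimately show ?thesis by simp
  qed
  then show "integrable lborel (\<lambda>u. conv_integrand p q t h (s, u))"
    "(LINT u|lborel. conv_integrand p q t h (s, u)) = G"
    "(LINT u|lborel. \<bar>conv_integrand p q t h (s, u)\<bar>) = \<bar>G\<bar>"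
    by blast+
qed

lemma conv_integrand_inner_s:
  fixes p q t u :: real and h :: "real \<Rightarrow> real"
  assumes q: "0 < q" and h: "continuous_on UNIV h"
  shows "(LINT s|lborel. conv_integrand p q t h (s, u)) = indicator {0..t} u * ((t-u) powr (p-1) * frac_conv q h u)"
proof (cases "0 < u \<and> u \<le> t")
  case True
  have "(\<lambda>s. conv_integrand p q t h (s, u)) =
      (\<lambda>s. (t-u) powr (p-1) * (indicator {0..u} s *\<^sub>R ((u-s) powr (q-1) * h s)))"
    using True by (auto simp: conv_integrand_def indicator_def fun_eq_iff)
  then have "(LINT s|lborel. conv_integrand p q t h (s, u)) =
      (t-u) powr (p-1) * (LINT s:{0..u}|lborel. (u-s) powr (q-1) * h s)"
    unfolding set_lebesgue_integral_def by simp
  also have "\<dots> = (t-u) powr (p-1) * frac_conv q h u"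
    using set_borel_integral_eq_integral(2)[OF set_integrable_powr_kernel[OF q _ h, of u]] True
    by (simp add: frac_conv_def)
  finally show ?thesis using True by simp
next
  case False
  then have "(\<lambda>s. conv_integrand p q t h (s, u)) = (\<lambda>s. 0)"
    by (auto simp: conv_integrand_def fun_eq_iff)
  then show ?thesis using False by (auto simp: indicator_def frac_conv_def)
qed

lemma integrable_conv_integrand:
  fixes p q t :: real and h :: "real \<Rightarrow> real"
  assumes p: "0 < p" and q: "0 < q" and pq: "1 \<le> p + q" and h: "continuous_on UNIV h"
  shows "integrable (lborel \<Otimes>\<^sub>M lborel) (conv_integrand p q t h)"
proof -
  have [measurable]: "h \<in> borel_measurable borel" by (rule borel_measurable_continuous_onI[OF h])
  obtain M where M: "\<And>s. s \<in> {0..t} \<Longrightarrow> \<bar>h s\<bar> \<le> M"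
    using bounded_on_interval_if_continuous[OF h] by blast
  define G where "G = (\<lambda>s. indicator {0..t} s * (Beta q p * (t-s) powr (p+q-1) * h s))"
  have "integrable lborel G"
  proof (rule Bochner_Integration.integrable_bound)
    show "integrable lborel (\<lambda>s. indicator {0..t} s *\<^sub>R (Beta q p * t powr (p+q-1) * M))"
      using borel_integrable_atLeastAtMost'[of 0 t "\<lambda>_. Beta q p * t powr (p+q-1) * M"]
      unfolding set_integrable_def by simp
    show "AE s in lborel. norm (G s) \<le> norm (indicator {0..t} s *\<^sub>R (Beta q p * t powr (p+q-1) * M))"
    proof (intro AE_I2)
      fix s
      show "norm (G s) \<le> norm (indicator {0..t} s *\<^sub>R (Beta q p * t powr (p+q-1) * M))"
      proof (cases "s \<in> {0..t}")
        case True
        then have "(t-s) powr (p+q-1) \<le> t powr (p+q-1)" using pq by (intro powr_mono2) auto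
        then have "Beta q p * (t-s) powr (p+q-1) * \<bar>h s\<bar> \<le> Beta q p * t powr (p+q-1) * M"
          using M[OF True] Beta_real_pos[OF q p] True by (intro mult_mono) auto
        then show ?thesis
          using True Beta_real_pos[OF q p] M[OF True] by (simp add: G_def abs_mult)
      qed (simp add: G_def)
    qed
  qed (simp add: G_def)
  then show ?thesis
    by (intro lborel_pair.Fubini_integrable) (auto simp: conv_integrand_inner_u[OF p q] G_def)
qed

text \<open>Fubini on the triangle \<open>0 \<le> s \<le> u \<le> t\<close> together with the Beta integral in \<open>u\<close>.\<close>

lemma frac_conv_frac_conv:
  fixes p q t :: real and h :: "real \<Rightarrow> real"
  assumes p: "0 < p" and q: "0 < q" and pq: "1 \<le> p + q" and t: "0 < t" and h: "continuous_on UNIV h"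
  shows "(\<lambda>u. (t-u) powr (p-1) * frac_conv q h u) integrable_on {0..t}"
    and "integral {0..t} (\<lambda>u. (t-u) powr (p-1) * frac_conv q h u) = Beta q p * frac_conv (p+q) h t"
proof -
  note F = integrable_conv_integrand[OF p q pq h, of t]
  have Fi: "integrable (lborel \<Otimes>\<^sub>M lborel) (\<lambda>(s, u). conv_integrand p q t h (s, u))"
    using F by simp
  have "integrable lborel (\<lambda>u. LINT s|lborel. conv_integrand p q t h (s, u))"
    using lborel_pair.integrable_snd[OF Fi] by simp
  then have sl: "set_integrable lborel {0..t} (\<lambda>u. (t-u) powr (p-1) * frac_conv q h u)"
    unfolding set_integrable_def conv_integrand_inner_s[OF q h] by (simp add: mult_ac)
  then show "(\<lambda>u. (t-u) powr (p-1) * frac_conv q h u) integrable_on {0..t}"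
    by (rule set_borel_integral_eq_integral(1))
  have "integral {0..t} (\<lambda>u. (t-u) powr (p-1) * frac_conv q h u)
      = (LINT u|lborel. LINT s|lborel. conv_integrand p q t h (s, u))"
    using set_borel_integral_eq_integral(2)[OF sl]
    unfolding conv_integrand_inner_s[OF q h] set_lebesgue_integral_def by (simp add: mult_ac)
  also have "\<dots> = (LINT s|lborel. LINT u|lborel. conv_integrand p q t h (s, u))"
    using lborel_pair.Fubini_integral[OF Fi] by simp
  also have "\<dots> = (LINT s|lborel. Beta q p * (indicator {0..t} s *\<^sub>R ((t-s) powr (p+q-1) * h s)))"
    unfolding conv_integrand_inner_u[OF p q]
    by (intro Bochner_Integration.integral_cong) (auto simp: indicator_def)
  also have "\<dots> = Beta q p * (LINT s:{0..t}|lborel. (t-s) powr (p+q-1) * h s)"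
    unfolding set_lebesgue_integral_def by simp
  also have "\<dots> = Beta q p * frac_conv (p+q) h t"
    using set_borel_integral_eq_integral(2)[OF set_integrable_powr_kernel[OF _ _ h, of "p+q" t]] p q t
    by (simp add: frac_conv_def)
  finally show "integral {0..t} (\<lambda>u. (t-u) powr (p-1) * frac_conv q h u) = Beta q p * frac_conv (p+q) h t" .
qed

lemma frac_conv_1:
  fixes t :: real and h :: "real \<Rightarrow> real"
  shows "frac_conv 1 h t = integral {0..t} h"
  unfolding frac_conv_def by (rule integral_spike[of "{t}"]) auto

lemma frac_conv_add_one:
  fixes \<alpha> t :: real and h :: "real \<Rightarrow> real"
  assumes \<alpha>: "0 < \<alpha>" and t: "0 < t" and h: "continuous_on UNIV h"
  shows "frac_conv (1+\<alpha>) h t = \<alpha> * integral {0..t} (frac_conv \<alpha> h)"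
proof -
  have "integral {0..t} (\<lambda>u. (t-u) powr (1-1) * frac_conv \<alpha> h u) = Beta \<alpha> 1 * frac_conv (1+\<alpha>) h t"
    using frac_conv_frac_conv(2)[of 1 \<alpha> t h] \<alpha> t h by simp
  moreover have "integral {0..t} (\<lambda>u. (t-u) powr (1-1) * frac_conv \<alpha> h u) = integral {0..t} (frac_conv \<alpha> h)"
    by (rule integral_spike[of "{t}"]) auto
  ultimately show ?thesis using Beta_real_1_right[OF \<alpha>] \<alpha> by (simp add: field_simps)
qed

lemma has_real_derivative_frac_conv_add_one:
  fixes \<alpha> t :: real and h :: "real \<Rightarrow> real"
  assumes \<alpha>: "0 < \<alpha>" and t: "0 < t" and h: "continuous_on UNIV h"
  shows "(frac_conv (1+\<alpha>) h has_real_derivative \<alpha> * frac_conv \<alpha> h t) (at t)"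
proof -
  have "((\<lambda>x. integral {0..x} (frac_conv \<alpha> h)) has_real_derivative frac_conv \<alpha> h t) (at t within {0..t+1})"
    by (rule integral_has_real_derivative)
       (use t continuous_on_frac_conv[OF \<alpha> h] in \<open>auto intro: continuous_on_subset\<close>)
  then have "((\<lambda>x. \<alpha> * integral {0..x} (frac_conv \<alpha> h)) has_real_derivative \<alpha> * frac_conv \<alpha> h t) (at t)"
    using at_within_Icc_at[of 0 t "t+1"] t by (auto intro: DERIV_cmult)
  then show ?thesis
    by (rule has_field_derivative_transform_within_open[of _ _ _ "{0<..}"])
       (use t frac_conv_add_one[OF \<alpha> _ h] in auto)
qed

lemma has_integral_powr_kernel_complementary:
  fixes \<alpha> \<tau> :: real
  assumes \<alpha>0: "0 < \<alpha>" and \<alpha>1: "\<alpha> < 1" and \<tau>: "0 < \<tau>"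
  shows "((\<lambda>u. (\<tau>-u) powr (-\<alpha>) * u powr (\<alpha>-1)) has_integral Gamma \<alpha> * Gamma (1-\<alpha>)) {0..\<tau>}"
  using has_integral_Beta_interval[of "1-\<alpha>" \<alpha> 0 \<tau>] assms by (simp add: Beta_def)

lemma has_integral_frac_conv_complementary:
  fixes \<alpha> \<tau> :: real and h :: "real \<Rightarrow> real"
  assumes \<alpha>0: "0 < \<alpha>" and \<alpha>1: "\<alpha> < 1" and \<tau>: "0 < \<tau>" and h: "continuous_on UNIV h"
  shows "((\<lambda>u. (\<tau>-u) powr (-\<alpha>) * frac_conv \<alpha> h u) has_integral Gamma \<alpha> * Gamma (1-\<alpha>) * integral {0..\<tau>} h) {0..\<tau>}"
proof -
  have "(\<lambda>u. (\<tau>-u) powr (1-\<alpha>-1) * frac_conv \<alpha> h u) integrable_on {0..\<tau>}"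
    and "integral {0..\<tau>} (\<lambda>u. (\<tau>-u) powr (1-\<alpha>-1) * frac_conv \<alpha> h u) = Beta \<alpha> (1-\<alpha>) * frac_conv 1 h \<tau>"
    using frac_conv_frac_conv[of "1-\<alpha>" \<alpha> \<tau> h] assms by simp_all
  then show ?thesis
    by (simp add: frac_conv_1 Beta_def has_integral_iff)
qed

lemma has_integral_truncated_powr_kernel:
  fixes \<alpha> t :: real and g :: "real \<Rightarrow> real"
  assumes \<alpha>: "0 < \<alpha>" and t: "0 \<le> t" and g: "continuous_on UNIV g"
  shows "((\<lambda>s. (max (t-s) 0) powr \<alpha> * g s) has_integral frac_conv (1+\<alpha>) g t) {0..}"
proof -
  have "((\<lambda>s. (t-s) powr \<alpha> * g s) has_integral frac_conv (1+\<alpha>) g t) {0..t}"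
    using powr_kernel_integrable[of "1+\<alpha>" t g] \<alpha> t g by (simp add: frac_conv_def has_integral_iff)
  then have "((\<lambda>s. (max (t-s) 0) powr \<alpha> * g s) has_integral frac_conv (1+\<alpha>) g t) {0..t}"
    by (rule has_integral_eq[rotated]) auto
  moreover have "((\<lambda>s. (max (t-s) 0) powr \<alpha> * g s) has_integral 0) {t..}"
    by (rule has_integral_eq[rotated, OF has_integral_0]) auto
  ultimately have "((\<lambda>s. (max (t-s) 0) powr \<alpha> * g s) has_integral frac_conv (1+\<alpha>) g t + 0) ({0..t} \<union> {t..})"
    by (intro has_integral_Un) (auto intro: negligible_subset[of "{t}"])
  moreover have "{0..t} \<union> {t..} = ({0..} :: real set)" using t by auto
  ultimately show ?thesis by simp
qed

lemma Gamma_1_plus_real: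
  fixes \<alpha> :: real
  assumes "0 < \<alpha>"
  shows "Gamma (1 + \<alpha>) = \<alpha> * Gamma \<alpha>"
proof -
  have "\<alpha> \<notin> \<int>\<^sub>\<le>\<^sub>0" using assms nonpos_Ints_nonpos by fastforce
  then show ?thesis using Gamma_plus1[of \<alpha>] by (simp add: add.commute)
qed

section \<open>The kernel of the integral equation\<close>

text \<open>Solutions are the fixed points of
  \<open>x(t) = c + b t\<^sup>\<alpha> + \<Gamma>(1+\<alpha>)\<^sup>-\<^sup>1 \<integral>\<^sub>0\<^sup>\<infinity> (t\<^sup>\<alpha> - (t-s)\<^sub>+\<^sup>\<alpha>) a(s) x(s) ds\<close>;
  the positive parts also extend the kernel continuously to \<open>t < 0\<close>.\<close>

definition green_kernel :: "real \<Rightarrow> real \<Rightarrow> real \<Rightarrow> real" where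
  "green_kernel \<alpha> t s = (max t 0) powr \<alpha> - (max (t-s) 0) powr \<alpha>"

definition weight :: "real \<Rightarrow> real \<Rightarrow> real" where
  "weight \<alpha> s = 1 + (max s 0) powr \<alpha>"

lemma weight_ge_1: "1 \<le> weight \<alpha> s"
  by (simp add: weight_def)

lemma weight_nonzero [simp]: "weight \<alpha> s \<noteq> 0"
  using weight_ge_1[of \<alpha> s] by linarith

lemma nonneg_if_abs_le_weight:
  assumes "\<bar>y\<bar> \<le> B * weight \<alpha> s"
  shows "0 \<le> B"
proof -
  have "0 \<le> B * weight \<alpha> s" using assms abs_ge_zero[of y] by linarith
  then show ?thesis using weight_ge_1[of \<alpha> s] by (auto simp: zero_le_mult_iff)
qed

context
  fixes \<alpha> :: real
  assumes \<alpha>0: "0 < \<alpha>" and \<alpha>1: "\<alpha> < 1"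
begin

lemma mult_powr_le_powr:
  assumes t: "0 < t" and v: "0 \<le> v" "v \<le> t"
  shows "v * t powr (\<alpha>-1) \<le> v powr \<alpha>"
proof (cases "v = 0")
  case False
  then have v0: "0 < v" using v by auto
  have "v * t powr (\<alpha>-1) \<le> v * v powr (\<alpha>-1)"
    using v0 v \<alpha>1 by (intro mult_left_mono powr_mono2') auto
  also have "\<dots> = v powr \<alpha>" using v0 powr_add[of v 1 "\<alpha>-1"] by simp
  finally show ?thesis .
qed simp

lemma powr_subadditive:
  assumes "0 \<le> s" "s \<le> t"
  shows "t powr \<alpha> \<le> (t-s) powr \<alpha> + s powr \<alpha>"
proof (cases "t = 0")
  case False
  then have t: "0 < t" using assms by auto
  have "s * t powr (\<alpha>-1) \<le> s powr \<alpha>" "(t-s) * t powr (\<alpha>-1) \<le> (t-s) powr \<alpha>"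
    using t assms by (auto intro: mult_powr_le_powr)
  moreover have "t * t powr (\<alpha>-1) = t powr \<alpha>" using t powr_add[of t 1 "\<alpha>-1"] by simp
  ultimately show ?thesis by (simp add: algebra_simps)
qed (use assms in simp)

lemma powr_le_one_plus:
  assumes s: "0 \<le> s"
  shows "s powr \<alpha> \<le> 1 + s"
proof -
  have "s powr \<alpha> \<le> (1+s) powr \<alpha>" using s \<alpha>0 by (intro powr_mono2) auto
  also have "\<dots> \<le> (1+s) powr 1" using s \<alpha>1 by (intro powr_mono) auto
  finally show ?thesis using s by simp
qed

lemma continuous_on_green_kernel: "continuous_on UNIV (\<lambda>t. green_kernel \<alpha> t s)"
  unfolding green_kernel_def by (intro continuous_intros continuous_on_powr') (use \<alpha>0 in auto)

lemma continuous_on_green_kernel': "continuous_on UNIV (green_kernel \<alpha> t)"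
  unfolding green_kernel_def by (intro continuous_intros continuous_on_powr') (use \<alpha>0 in auto)

lemma continuous_on_powr_pos_part: "continuous_on UNIV (\<lambda>t. (max t 0) powr \<alpha>)"
  by (intro continuous_intros continuous_on_powr') (use \<alpha>0 in auto)

lemma continuous_on_weight: "continuous_on UNIV (weight \<alpha>)"
  unfolding weight_def by (intro continuous_intros continuous_on_powr_pos_part)

lemma borel_measurable_green_kernel [measurable]: "green_kernel \<alpha> t \<in> borel_measurable borel"
  by (rule borel_measurable_continuous_onI[OF continuous_on_green_kernel'])

lemma borel_measurable_weight [measurable]: "weight \<alpha> \<in> borel_measurable borel"
  by (rule borel_measurable_continuous_onI[OF continuous_on_weight])

lemma green_kernel_nonneg: "0 \<le> s \<Longrightarrow> 0 \<le> green_kernel \<alpha> t s"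
  unfolding green_kernel_def using \<alpha>0 by (auto intro!: powr_mono2)

lemma green_kernel_le_powr:
  assumes s: "0 \<le> s"
  shows "green_kernel \<alpha> t s \<le> s powr \<alpha>"
proof (cases "s \<le> t")
  case True
  then show ?thesis using powr_subadditive[of s t] s by (simp add: green_kernel_def max_def)
next
  case False
  then have "(max t 0) powr \<alpha> \<le> s powr \<alpha>" using s \<alpha>0 by (intro powr_mono2) auto
  then show ?thesis using False by (simp add: green_kernel_def)
qed

lemma green_kernel_le_linear:
  assumes t: "0 < t" and s: "0 \<le> s"
  shows "green_kernel \<alpha> t s \<le> s * t powr (\<alpha>-1)"
proof -
  have tt: "t * t powr (\<alpha>-1) = t powr \<alpha>" using t powr_add[of t 1 "\<alpha>-1"] by simp
  show ?thesis
  proof (cases "s \<le> t")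
    case True
    have "(t-s) * t powr (\<alpha>-1) \<le> (t-s) powr \<alpha>" using t s True by (intro mult_powr_le_powr) auto
    then show ?thesis using True t tt by (simp add: green_kernel_def algebra_simps)
  next
    case False
    then have "t * t powr (\<alpha>-1) \<le> s * t powr (\<alpha>-1)" by (intro mult_right_mono) auto
    then show ?thesis using False t tt by (simp add: green_kernel_def)
  qed
qed

lemma green_kernel_weight_le:
  assumes s: "0 \<le> s"
  shows "green_kernel \<alpha> t s * weight \<alpha> s \<le> s powr \<alpha> * weight \<alpha> t"
proof -
  define t' where "t' = max t 0"
  have K: "0 \<le> green_kernel \<alpha> t s" "green_kernel \<alpha> t s \<le> t' powr \<alpha>" "green_kernel \<alpha> t s \<le> s powr \<alpha>"
    using green_kernel_nonneg[OF s] green_kernel_le_powr[OF s] by (auto simp: green_kernel_def t'_def)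
  have wt: "weight \<alpha> t = 1 + t' powr \<alpha>" and ws: "weight \<alpha> s = 1 + s powr \<alpha>"
    using s by (simp_all add: weight_def t'_def)
  show ?thesis
  proof (cases "t' \<le> s")
    case True
    have "t' powr \<alpha> \<le> s powr \<alpha>" using True \<alpha>0 by (intro powr_mono2) (auto simp: t'_def)
    then have "t' powr \<alpha> * (1 + s powr \<alpha>) \<le> s powr \<alpha> * (1 + t' powr \<alpha>)"
      by (simp add: algebra_simps)
    moreover have "green_kernel \<alpha> t s * (1 + s powr \<alpha>) \<le> t' powr \<alpha> * (1 + s powr \<alpha>)"
      using K by (intro mult_right_mono) auto
    ultimately show ?thesis unfolding wt ws by linarith
  next
    case False
    have "s powr \<alpha> \<le> t' powr \<alpha>" using False s \<alpha>0 by (intro powr_mono2) auto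
    then have "green_kernel \<alpha> t s * (1 + s powr \<alpha>) \<le> s powr \<alpha> * (1 + t' powr \<alpha>)"
      using K by (intro mult_mono) auto
    then show ?thesis unfolding wt ws .
  qed
qed

end

section \<open>The fixed-point problem\<close>

locale fde_data =
  fixes \<alpha> T k :: real and a :: "real \<Rightarrow> real"
  assumes \<alpha>0: "0 < \<alpha>" and \<alpha>1: "\<alpha> < 1"
    and a_cont: "continuous_on {0..} a"
    and T0: "0 < T"
    and a_tail: "(\<lambda>s. s powr (1 + \<alpha>) * \<bar>a s\<bar>) integrable_on {T..}"
    and k_eq: "max 1 (T powr \<alpha>) / Gamma (1 + \<alpha>) *
           (integral {0..T} (\<lambda>s. \<bar>a s\<bar>) + integral {T..} (\<lambda>s. s powr \<alpha> * \<bar>a s\<bar>)) = k"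
    and k_less_1: "k < 1"
begin

declare borel_measurable_weight[OF \<alpha>0 \<alpha>1, measurable]
  borel_measurable_green_kernel[OF \<alpha>0 \<alpha>1, measurable]

lemma Gamma_1_plus_\<alpha>_pos: "0 < Gamma (1 + \<alpha>)"
  using \<alpha>0 by (intro Gamma_real_pos) simp

lemma Gamma_1_plus_\<alpha>_nonzero: "Gamma (1 + \<alpha>) \<noteq> 0"
  using Gamma_1_plus_\<alpha>_pos by linarith

definition a_ext :: "real \<Rightarrow> real" where
  "a_ext s = a (max s 0)"

lemma a_ext_eq: "0 \<le> s \<Longrightarrow> a_ext s = a s"
  by (simp add: a_ext_def)

lemma continuous_on_a_ext: "continuous_on UNIV a_ext"
  unfolding a_ext_def by (rule continuous_on_compose2[OF a_cont]) (auto intro!: continuous_intros)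

lemma borel_measurable_a_ext [measurable]: "a_ext \<in> borel_measurable borel"
  by (rule borel_measurable_continuous_onI[OF continuous_on_a_ext])

definition majorant :: "real \<Rightarrow> real" where
  "majorant s = (1 + s) * weight \<alpha> s * \<bar>a_ext s\<bar>"

lemma borel_measurable_majorant [measurable]: "majorant \<in> borel_measurable borel"
  unfolding majorant_def by measurable

lemma majorant_ge:
  assumes "v \<le> 1 + s"
  shows "v * (weight \<alpha> s * \<bar>a_ext s\<bar>) \<le> majorant s"
proof -
  have "0 \<le> weight \<alpha> s * \<bar>a_ext s\<bar>" using weight_ge_1[of \<alpha> s] by simp
  from mult_right_mono[OF assms this] show ?thesis by (simp add: majorant_def mult.assoc)
qed

lemma majorant_le_powr_tail:
  assumes s: "T \<le> s"
  shows "majorant s \<le> (1 / T powr \<alpha> + 1) * (1 / T + 1) * (s powr (1 + \<alpha>) * \<bar>a_ext s\<bar>)"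
proof -
  have s0: "0 < s" using s T0 by auto
  have "T powr \<alpha> \<le> s powr \<alpha>" using s T0 \<alpha>0 by (intro powr_mono2) auto
  then have "weight \<alpha> s \<le> (1 / T powr \<alpha> + 1) * s powr \<alpha>"
    using s0 T0 by (simp add: weight_def field_simps)
  moreover have "1 + s \<le> (1 / T + 1) * s" using s T0 by (simp add: field_simps)
  ultimately have "(1 + s) * weight \<alpha> s \<le> ((1 / T + 1) * s) * ((1 / T powr \<alpha> + 1) * s powr \<alpha>)"
    using s0 weight_ge_1[of \<alpha> s] by (intro mult_mono) auto
  also have "\<dots> = (1 / T powr \<alpha> + 1) * (1 / T + 1) * s powr (1 + \<alpha>)"
    using s0 powr_add[of s 1 \<alpha>] by (simp add: algebra_simps)
  finally show ?thesis
    unfolding majorant_def mult.assoc[symmetric] by (rule mult_right_mono) simp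
qed

lemma set_integrable_majorant: "set_integrable lborel {0..} majorant"
proof -
  have "set_integrable lborel {0..T} majorant"
    unfolding majorant_def
    by (intro borel_integrable_atLeastAtMost' continuous_intros continuous_on_subset[OF continuous_on_a_ext]
          continuous_on_subset[OF continuous_on_weight[OF \<alpha>0 \<alpha>1]]) auto
  moreover have "set_integrable lborel {T..} majorant"
  proof (rule set_integrable_bound)
    have "(\<lambda>s. s powr (1 + \<alpha>) * \<bar>a_ext s\<bar>) integrable_on {T..}"
      by (rule integrable_eq[OF a_tail]) (use T0 in \<open>auto simp: a_ext_eq\<close>)
    then have "(\<lambda>s. s powr (1 + \<alpha>) * \<bar>a_ext s\<bar>) absolutely_integrable_on {T..}"
      by (subst absolutely_integrable_on_iff_nonneg) auto
    then have "set_integrable lborel {T..} (\<lambda>s. s powr (1 + \<alpha>) * \<bar>a_ext s\<bar>)"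
      by (rule set_integrable_lborel_if_absolutely_integrable[rotated 2]) auto
    then show "set_integrable lborel {T..}
        (\<lambda>s. (1 / T powr \<alpha> + 1) * (1 / T + 1) * (s powr (1 + \<alpha>) * \<bar>a_ext s\<bar>))"
      by (rule set_integrable_mult_right)
    show "set_borel_measurable lborel {T..} majorant"
      unfolding set_borel_measurable_def by measurable
    show "AE s in lborel. s \<in> {T..} \<longrightarrow>
        norm (majorant s) \<le> norm ((1 / T powr \<alpha> + 1) * (1 / T + 1) * (s powr (1 + \<alpha>) * \<bar>a_ext s\<bar>))"
      using majorant_le_powr_tail T0 by (intro AE_I2) (auto simp: majorant_def weight_def)
  qed
  ultimately have "set_integrable lborel ({0..T} \<union> {T..}) majorant"
    by (rule set_integrable_Un) auto
  also have "{0..T} \<union> {T..} = ({0..} :: real set)" using T0 by auto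
  finally show ?thesis .
qed

lemma set_integrable_if_le_majorant:
  fixes f :: "real \<Rightarrow> real"
  assumes [measurable]: "f \<in> borel_measurable borel" and le: "\<And>s. 0 \<le> s \<Longrightarrow> \<bar>f s\<bar> \<le> C * majorant s"
  shows "set_integrable lborel {0..} f" and "f integrable_on {0..}"
proof -
  show si: "set_integrable lborel {0..} f"
  proof (rule set_integrable_bound[OF set_integrable_mult_right[OF set_integrable_majorant, of C]])
    show "set_borel_measurable lborel {0..} f" unfolding set_borel_measurable_def by measurable
    show "AE x in lborel. x \<in> {0..} \<longrightarrow> norm (f x) \<le> norm (C * majorant x)"
      using le by (intro AE_I2) force
  qed
  then show "f integrable_on {0..}" by (rule set_borel_integral_eq_integral(1))
qed

definition moment :: real where
  "moment = integral {0..} (\<lambda>s. s powr \<alpha> * \<bar>a_ext s\<bar>)"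

lemma powr_a_ext_le_majorant:
  assumes s: "0 \<le> s"
  shows "s powr \<alpha> * \<bar>a_ext s\<bar> \<le> majorant s"
proof -
  have "s powr \<alpha> * \<bar>a_ext s\<bar> \<le> s powr \<alpha> * (weight \<alpha> s * \<bar>a_ext s\<bar>)"
    using mult_right_mono[OF weight_ge_1, of "\<bar>a_ext s\<bar>" \<alpha> s] by (intro mult_left_mono) auto
  also have "\<dots> \<le> majorant s" by (rule majorant_ge[OF powr_le_one_plus[OF \<alpha>0 \<alpha>1 s]])
  finally show ?thesis .
qed

lemma set_integrable_powr_a_ext: "set_integrable lborel {0..} (\<lambda>s. s powr \<alpha> * \<bar>a_ext s\<bar>)"
  and integrable_powr_a_ext: "(\<lambda>s. s powr \<alpha> * \<bar>a_ext s\<bar>) integrable_on {0..}"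
  by (rule set_integrable_if_le_majorant[of _ 1]; use powr_a_ext_le_majorant in simp)+

lemma moment_le:
  "moment \<le> T powr \<alpha> * integral {0..T} (\<lambda>s. \<bar>a s\<bar>) + integral {T..} (\<lambda>s. s powr \<alpha> * \<bar>a s\<bar>)"
proof -
  define f where "f = (\<lambda>s. s powr \<alpha> * \<bar>a_ext s\<bar>)"
  have f1: "f integrable_on {0..T}"
    unfolding f_def by (intro integrable_continuous_interval continuous_intros continuous_on_powr'
        continuous_on_subset[OF continuous_on_a_ext]) (use \<alpha>0 in auto)
  have f2: "f integrable_on {T..}"
    using set_integrable_subset[OF set_integrable_powr_a_ext, of "{T..}"] T0
    by (auto simp: f_def intro: set_borel_integral_eq_integral(1))
  have a1: "(\<lambda>s. \<bar>a s\<bar>) integrable_on {0..T}"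
    by (intro integrable_continuous_interval continuous_intros continuous_on_subset[OF a_cont]) auto
  have "{0..T} \<union> {T..} = ({0..} :: real set)" using T0 by auto
  then have "moment = integral ({0..T} \<union> {T..}) f" by (simp add: moment_def f_def)
  also have "\<dots> = integral {0..T} f + integral {T..} f"
    by (rule integral_Un[OF f1 f2]) (use T0 in \<open>auto intro: negligible_subset[of "{T}"]\<close>)
  also have "integral {0..T} f \<le> integral {0..T} (\<lambda>s. T powr \<alpha> * \<bar>a s\<bar>)"
    using f1 integrable_on_mult_right[OF a1] \<alpha>0
    by (intro integral_le) (auto simp: f_def a_ext_eq intro!: mult_right_mono powr_mono2)
  also have "integral {T..} f = integral {T..} (\<lambda>s. s powr \<alpha> * \<bar>a s\<bar>)"
    unfolding f_def by (rule integral_cong) (use T0 in \<open>auto simp: a_ext_eq\<close>)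
  finally show ?thesis by simp
qed

definition lipschitz_const :: real where
  "lipschitz_const = moment / Gamma (1 + \<alpha>)"

lemma lipschitz_const_nonneg: "0 \<le> lipschitz_const"
  unfolding lipschitz_const_def moment_def using Gamma_1_plus_\<alpha>_pos
  by (intro divide_nonneg_pos integral_nonneg[OF integrable_powr_a_ext]) auto

lemma lipschitz_const_less_1: "lipschitz_const < 1"
proof -
  define I1 where "I1 = integral {0..T} (\<lambda>s. \<bar>a s\<bar>)"
  define I2 where "I2 = integral {T..} (\<lambda>s. s powr \<alpha> * \<bar>a s\<bar>)"
  have "0 \<le> I1"
    unfolding I1_def by (intro integral_nonneg integrable_continuous_interval continuous_intros
        continuous_on_subset[OF a_cont]) auto
  moreover have "0 \<le> I2"
  proof -
    have "I2 = integral {T..} (\<lambda>s. s powr \<alpha> * \<bar>a_ext s\<bar>)"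
      unfolding I2_def by (rule integral_cong) (use T0 in \<open>auto simp: a_ext_eq\<close>)
    also have "\<dots> \<ge> 0"
      using set_integrable_subset[OF set_integrable_powr_a_ext, of "{T..}"] T0
      by (intro integral_nonneg) (auto intro: set_borel_integral_eq_integral(1))
    finally show ?thesis .
  qed
  ultimately have "T powr \<alpha> * I1 + 1 * I2 \<le> max 1 (T powr \<alpha>) * I1 + max 1 (T powr \<alpha>) * I2"
    by (intro add_mono mult_right_mono) auto
  then have "moment \<le> max 1 (T powr \<alpha>) * (I1 + I2)"
    using moment_le unfolding I1_def[symmetric] I2_def[symmetric] by (simp add: distrib_left)
  then have "lipschitz_const \<le> k"
    using k_eq Gamma_1_plus_\<alpha>_pos unfolding lipschitz_const_def I1_def I2_def
    by (auto simp: divide_right_mono)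
  then show ?thesis using k_less_1 by linarith
qed

lemma green_integrand_le_majorant:
  assumes y: "\<And>s. 0 \<le> s \<Longrightarrow> \<bar>y s\<bar> \<le> B * weight \<alpha> s" and s: "0 \<le> s"
  shows "\<bar>green_kernel \<alpha> t s * a_ext s * y s\<bar> \<le> B * majorant s"
proof -
  have B: "0 \<le> B" by (rule nonneg_if_abs_le_weight[OF y[OF s]])
  have K: "0 \<le> green_kernel \<alpha> t s" "green_kernel \<alpha> t s \<le> s powr \<alpha>"
    using green_kernel_nonneg[OF \<alpha>0 \<alpha>1 s] green_kernel_le_powr[OF \<alpha>0 \<alpha>1 s] .
  have "\<bar>green_kernel \<alpha> t s * a_ext s * y s\<bar> = green_kernel \<alpha> t s * \<bar>a_ext s\<bar> * \<bar>y s\<bar>"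
    using K by (simp add: abs_mult)
  also have "\<dots> \<le> s powr \<alpha> * \<bar>a_ext s\<bar> * (B * weight \<alpha> s)"
    using K y[OF s] by (intro mult_mono) auto
  also have "\<dots> = B * (s powr \<alpha> * (weight \<alpha> s * \<bar>a_ext s\<bar>))" by (simp add: algebra_simps)
  also have "\<dots> \<le> B * majorant s"
    using majorant_ge[OF powr_le_one_plus[OF \<alpha>0 \<alpha>1 s]] B by (intro mult_left_mono)
  finally show ?thesis .
qed

lemma green_integrand_integrable:
  assumes "continuous_on UNIV y" and "\<And>s. 0 \<le> s \<Longrightarrow> \<bar>y s\<bar> \<le> B * weight \<alpha> s"
  shows "(\<lambda>s. green_kernel \<alpha> t s * a_ext s * y s) integrable_on {0..}"
proof (rule set_integrable_if_le_majorant(2))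
  have [measurable]: "y \<in> borel_measurable borel" by (rule borel_measurable_continuous_onI[OF assms(1)])
  show "(\<lambda>s. green_kernel \<alpha> t s * a_ext s * y s) \<in> borel_measurable borel" by measurable
qed (use green_integrand_le_majorant[OF assms(2)] in blast)

lemma abs_green_integral_le:
  assumes y: "continuous_on UNIV y" and B: "\<And>s. 0 \<le> s \<Longrightarrow> \<bar>y s\<bar> \<le> B * weight \<alpha> s"
  shows "\<bar>integral {0..} (\<lambda>s. green_kernel \<alpha> t s * a_ext s * y s)\<bar> \<le> B * weight \<alpha> t * moment"
proof -
  have "norm (integral {0..} (\<lambda>s. green_kernel \<alpha> t s * a_ext s * y s))
      \<le> integral {0..} (\<lambda>s. B * weight \<alpha> t * (s powr \<alpha> * \<bar>a_ext s\<bar>))"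
  proof (rule integral_norm_bound_integral)
    show "(\<lambda>s. green_kernel \<alpha> t s * a_ext s * y s) integrable_on {0..}"
      by (rule green_integrand_integrable[OF y B])
    show "(\<lambda>s. B * weight \<alpha> t * (s powr \<alpha> * \<bar>a_ext s\<bar>)) integrable_on {0..}"
      by (rule integrable_on_mult_right[OF integrable_powr_a_ext])
    fix s :: real assume "s \<in> {0..}"
    then have s: "0 \<le> s" by simp
    have K: "0 \<le> green_kernel \<alpha> t s" by (rule green_kernel_nonneg[OF \<alpha>0 \<alpha>1 s])
    have "\<bar>green_kernel \<alpha> t s * a_ext s * y s\<bar> = \<bar>a_ext s\<bar> * (green_kernel \<alpha> t s * \<bar>y s\<bar>)"
      using K by (simp add: abs_mult)
    also have "\<dots> \<le> \<bar>a_ext s\<bar> * (green_kernel \<alpha> t s * (B * weight \<alpha> s))"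
      using B[OF s] K by (intro mult_left_mono) auto
    also have "\<dots> = \<bar>a_ext s\<bar> * B * (green_kernel \<alpha> t s * weight \<alpha> s)" by (simp add: algebra_simps)
    also have "\<dots> \<le> \<bar>a_ext s\<bar> * B * (s powr \<alpha> * weight \<alpha> t)"
    proof (rule mult_left_mono[OF green_kernel_weight_le[OF \<alpha>0 \<alpha>1 s]])
      show "0 \<le> \<bar>a_ext s\<bar> * B" using nonneg_if_abs_le_weight[OF B[OF s]] by simp
    qed
    finally show "norm (green_kernel \<alpha> t s * a_ext s * y s) \<le> B * weight \<alpha> t * (s powr \<alpha> * \<bar>a_ext s\<bar>)"
      by (simp add: algebra_simps)
  qed
  then show ?thesis by (simp add: moment_def)
qed

lemma continuous_on_green_integral:
  assumes y: "continuous_on UNIV y" and B: "\<And>s. 0 \<le> s \<Longrightarrow> \<bar>y s\<bar> \<le> B * weight \<alpha> s"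
  shows "continuous_on UNIV (\<lambda>t. integral {0..} (\<lambda>s. green_kernel \<alpha> t s * a_ext s * y s))"
proof (rule continuous_on_sequentiallyI)
  fix x :: "nat \<Rightarrow> real" and t assume x: "x \<longlonglongrightarrow> t"
  show "(\<lambda>n. integral {0..} (\<lambda>s. green_kernel \<alpha> (x n) s * a_ext s * y s))
      \<longlonglongrightarrow> integral {0..} (\<lambda>s. green_kernel \<alpha> t s * a_ext s * y s)"
  proof (rule dominated_convergence(2))
    show "(\<lambda>s. green_kernel \<alpha> (x n) s * a_ext s * y s) integrable_on {0..}" for n
      by (rule green_integrand_integrable[OF y B])
    show "(\<lambda>s. B * majorant s) integrable_on {0..}"
      using set_borel_integral_eq_integral(1)[OF set_integrable_majorant] by (rule integrable_on_mult_right)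
    show "norm (green_kernel \<alpha> (x n) s * a_ext s * y s) \<le> B * majorant s" if "s \<in> {0..}" for n s
      using green_integrand_le_majorant[OF B] that by simp
  next
    fix s :: real
    have "(\<lambda>n. green_kernel \<alpha> (x n) s) \<longlonglongrightarrow> green_kernel \<alpha> t s"
      by (rule isCont_tendsto_compose[OF _ x])
         (use continuous_on_green_kernel[OF \<alpha>0 \<alpha>1, of s] in \<open>simp add: continuous_on_eq_continuous_at\<close>)
    then show "(\<lambda>n. green_kernel \<alpha> (x n) s * a_ext s * y s) \<longlonglongrightarrow> green_kernel \<alpha> t s * a_ext s * y s"
      by (intro tendsto_intros)
  qed
qed

definition sol_op :: "real \<Rightarrow> real \<Rightarrow> (real \<Rightarrow> real) \<Rightarrow> real \<Rightarrow> real" where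
  "sol_op c b y t = c + b * (max t 0) powr \<alpha>
     + integral {0..} (\<lambda>s. green_kernel \<alpha> t s * a_ext s * y s) / Gamma (1 + \<alpha>)"

lemma continuous_on_sol_op:
  assumes "continuous_on UNIV y" and "\<And>s. 0 \<le> s \<Longrightarrow> \<bar>y s\<bar> \<le> B * weight \<alpha> s"
  shows "continuous_on UNIV (sol_op c b y)"
  unfolding sol_op_def[abs_def]
  by (intro continuous_on_add continuous_on_mult continuous_on_divide continuous_on_const
      continuous_on_powr_pos_part[OF \<alpha>0 \<alpha>1] continuous_on_green_integral[OF assms])
     (use Gamma_1_plus_\<alpha>_nonzero in auto)

lemma abs_sol_op_diff_le:
  assumes y1: "continuous_on UNIV y1" "\<And>s. 0 \<le> s \<Longrightarrow> \<bar>y1 s\<bar> \<le> Ba * weight \<alpha> s"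
    and y2: "continuous_on UNIV y2" "\<And>s. 0 \<le> s \<Longrightarrow> \<bar>y2 s\<bar> \<le> Bb * weight \<alpha> s"
    and d: "\<And>s. 0 \<le> s \<Longrightarrow> \<bar>y1 s - y2 s\<bar> \<le> B * weight \<alpha> s"
  shows "\<bar>sol_op c b y1 t - sol_op c b y2 t\<bar> \<le> lipschitz_const * (B * weight \<alpha> t)"
proof -
  have "integral {0..} (\<lambda>s. green_kernel \<alpha> t s * a_ext s * y1 s)
      - integral {0..} (\<lambda>s. green_kernel \<alpha> t s * a_ext s * y2 s)
      = integral {0..} (\<lambda>s. green_kernel \<alpha> t s * a_ext s * y1 s - green_kernel \<alpha> t s * a_ext s * y2 s)"
    by (rule integral_diff[symmetric, OF green_integrand_integrable[OF y1] green_integrand_integrable[OF y2]])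
  also have "\<dots> = integral {0..} (\<lambda>s. green_kernel \<alpha> t s * a_ext s * (y1 s - y2 s))"
    by (simp add: algebra_simps)
  finally have "integral {0..} (\<lambda>s. green_kernel \<alpha> t s * a_ext s * y1 s)
      - integral {0..} (\<lambda>s. green_kernel \<alpha> t s * a_ext s * y2 s)
      = integral {0..} (\<lambda>s. green_kernel \<alpha> t s * a_ext s * (y1 s - y2 s))" .
  moreover have "\<bar>integral {0..} (\<lambda>s. green_kernel \<alpha> t s * a_ext s * (y1 s - y2 s))\<bar> \<le> B * weight \<alpha> t * moment"
    using d by (intro abs_green_integral_le) (auto intro: continuous_intros y1 y2)
  ultimately show ?thesis
    using Gamma_1_plus_\<alpha>_pos
    by (simp add: sol_op_def lipschitz_const_def diff_divide_distrib[symmetric] divide_right_mono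
        abs_divide mult_ac)
qed

lemma sol_op_0: "sol_op c b (\<lambda>s. 0) t = c + b * (max t 0) powr \<alpha>"
  by (simp add: sol_op_def)

lemma continuous_on_weight_mult: "continuous_on UNIV (\<lambda>s. weight \<alpha> s * apply_bcontfun u s)"
  by (intro continuous_intros continuous_on_weight[OF \<alpha>0 \<alpha>1]) auto

lemma abs_weight_mult_le: "\<bar>weight \<alpha> s * apply_bcontfun u s\<bar> \<le> norm u * weight \<alpha> s"
  using norm_bounded[of u s] weight_ge_1[of \<alpha> s] by (simp add: abs_mult mult.commute mult_left_mono)

text \<open>Dividing by the weight turns \<open>sol_op\<close> into a contraction on bounded continuous functions.\<close>

definition weighted_sol_op :: "real \<Rightarrow> real \<Rightarrow> (real \<Rightarrow>\<^sub>C real) \<Rightarrow> (real \<Rightarrow>\<^sub>C real)" where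
  "weighted_sol_op c b u = Bcontfun (\<lambda>t. sol_op c b (\<lambda>s. weight \<alpha> s * u s) t / weight \<alpha> t)"

lemma weighted_sol_op_bcontfun:
  fixes u :: "real \<Rightarrow>\<^sub>C real"
  shows "(\<lambda>t. sol_op c b (\<lambda>s. weight \<alpha> s * u s) t / weight \<alpha> t) \<in> bcontfun"
proof (rule bcontfun_normI)
  have "continuous_on UNIV (sol_op c b (\<lambda>s. weight \<alpha> s * u s))"
    by (rule continuous_on_sol_op[OF continuous_on_weight_mult]) (rule abs_weight_mult_le)
  then show "continuous_on UNIV (\<lambda>t. sol_op c b (\<lambda>s. weight \<alpha> s * u s) t / weight \<alpha> t)"
    by (intro continuous_on_divide continuous_on_weight[OF \<alpha>0 \<alpha>1]) auto
  fix t
  have w: "1 \<le> weight \<alpha> t" by (rule weight_ge_1)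
  have "\<bar>sol_op c b (\<lambda>s. weight \<alpha> s * u s) t - sol_op c b (\<lambda>s. 0) t\<bar> \<le> lipschitz_const * (norm u * weight \<alpha> t)"
    by (rule abs_sol_op_diff_le[where Ba="norm u" and Bb=0, OF continuous_on_weight_mult _ continuous_on_const])
       (use abs_weight_mult_le in auto)
  moreover have "\<bar>sol_op c b (\<lambda>s. 0) t\<bar> \<le> \<bar>c\<bar> * weight \<alpha> t + \<bar>b\<bar> * weight \<alpha> t"
  proof -
    have "\<bar>b * (max t 0) powr \<alpha>\<bar> \<le> \<bar>b\<bar> * weight \<alpha> t"
      by (simp add: abs_mult weight_def mult_left_mono)
    moreover have "\<bar>c\<bar> \<le> \<bar>c\<bar> * weight \<alpha> t" using w mult_left_mono[OF w, of "\<bar>c\<bar>"] by simp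
    ultimately show ?thesis unfolding sol_op_0 by linarith
  qed
  ultimately have "\<bar>sol_op c b (\<lambda>s. weight \<alpha> s * u s) t\<bar> \<le> (\<bar>c\<bar> + \<bar>b\<bar> + lipschitz_const * norm u) * weight \<alpha> t"
    by (simp add: algebra_simps)
  then show "norm (sol_op c b (\<lambda>s. weight \<alpha> s * u s) t / weight \<alpha> t) \<le> \<bar>c\<bar> + \<bar>b\<bar> + lipschitz_const * norm u"
    using w by (simp add: divide_le_eq)
qed

lemma apply_weighted_sol_op:
  fixes u :: "real \<Rightarrow>\<^sub>C real"
  shows "weighted_sol_op c b u t = sol_op c b (\<lambda>s. weight \<alpha> s * u s) t / weight \<alpha> t"
  unfolding weighted_sol_op_def using weighted_sol_op_bcontfun by (simp add: Bcontfun_inverse)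

lemma dist_weighted_sol_op_le:
  "dist (weighted_sol_op c b u) (weighted_sol_op c b v) \<le> lipschitz_const * dist u v"
proof (rule dist_bound)
  fix t
  have "\<bar>weight \<alpha> s * u s - weight \<alpha> s * v s\<bar> \<le> dist u v * weight \<alpha> s" for s
  proof -
    have "\<bar>weight \<alpha> s * u s - weight \<alpha> s * v s\<bar> = weight \<alpha> s * \<bar>u s - v s\<bar>"
      using weight_ge_1[of \<alpha> s] by (simp add: abs_mult flip: right_diff_distrib)
    also have "\<dots> \<le> weight \<alpha> s * dist u v"
      using dist_bounded[of u s v] weight_ge_1[of \<alpha> s] by (intro mult_left_mono) (auto simp: dist_real_def)
    finally show ?thesis by (simp add: mult.commute)
  qed
  then have "\<bar>sol_op c b (\<lambda>s. weight \<alpha> s * u s) t - sol_op c b (\<lambda>s. weight \<alpha> s * v s) t\<bar>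
      \<le> lipschitz_const * (dist u v * weight \<alpha> t)"
    by (intro abs_sol_op_diff_le[OF continuous_on_weight_mult _ continuous_on_weight_mult])
       (use abs_weight_mult_le in auto)
  then show "dist (weighted_sol_op c b u t) (weighted_sol_op c b v t) \<le> lipschitz_const * dist u v"
    using weight_ge_1[of \<alpha> t]
    by (simp add: apply_weighted_sol_op dist_real_def diff_divide_distrib[symmetric] abs_divide
        divide_le_eq mult_ac)
qed

lemma weighted_sol_op_has_fixed_point: "\<exists>u. weighted_sol_op c b u = u"
proof -
  have "\<exists>!u. weighted_sol_op c b u = u"
    by (rule banach_fix_type[OF lipschitz_const_nonneg lipschitz_const_less_1])
       (use dist_weighted_sol_op_le in blast)
  then show ?thesis by blast
qed
end

section \<open>The fixed point solves the equation\<close>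

locale fde_fixed_point = fde_data +
  fixes c b :: real and u :: "real \<Rightarrow>\<^sub>C real"
  assumes fixed_point: "weighted_sol_op c b u = u"
begin

definition sol :: "real \<Rightarrow> real" where
  "sol t = weight \<alpha> t * u t"

definition ax :: "real \<Rightarrow> real" where
  "ax s = a_ext s * sol s"

definition A :: real where
  "A = integral {0..} ax"

definition D :: real where
  "D = \<alpha> * (b + A / Gamma (1 + \<alpha>))"

definition sol_deriv :: "real \<Rightarrow> real" where
  "sol_deriv t = D * t powr (\<alpha>-1) - frac_conv \<alpha> ax t / Gamma \<alpha>"

lemma continuous_on_sol: "continuous_on UNIV sol"
  unfolding sol_def[abs_def] by (rule continuous_on_weight_mult)

lemma abs_sol_le: "\<bar>sol s\<bar> \<le> norm u * weight \<alpha> s"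
  unfolding sol_def by (rule abs_weight_mult_le)

lemma sol_eq_sol_op: "sol t = sol_op c b sol t"
proof -
  have "u t = weighted_sol_op c b u t" using fixed_point by simp
  also have "\<dots> = sol_op c b sol t / weight \<alpha> t"
    by (simp add: apply_weighted_sol_op sol_def[abs_def])
  finally show ?thesis by (simp add: sol_def)
qed

lemma continuous_on_ax: "continuous_on UNIV ax"
  unfolding ax_def[abs_def] by (intro continuous_intros continuous_on_a_ext continuous_on_sol)

lemma borel_measurable_ax [measurable]: "ax \<in> borel_measurable borel"
  by (rule borel_measurable_continuous_onI[OF continuous_on_ax])

lemma abs_ax_le: "\<bar>ax s\<bar> \<le> norm u * (weight \<alpha> s * \<bar>a_ext s\<bar>)"
  using mult_left_mono[OF abs_sol_le, of "\<bar>a_ext s\<bar>" s] by (simp add: ax_def abs_mult mult_ac)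

lemma integrable_ax: "ax integrable_on {0..}"
proof (rule set_integrable_if_le_majorant(2)[of _ "norm u"])
  fix s :: real assume "0 \<le> s"
  then have "1 * (weight \<alpha> s * \<bar>a_ext s\<bar>) \<le> majorant s" by (intro majorant_ge) simp
  then show "\<bar>ax s\<bar> \<le> norm u * majorant s"
    using abs_ax_le[of s] mult_left_mono[of _ _ "norm u"] by fastforce
qed simp

lemma integrable_first_moment_ax: "(\<lambda>s. s * \<bar>ax s\<bar>) integrable_on {0..}"
proof (rule set_integrable_if_le_majorant(2)[of _ "norm u"])
  fix s :: real assume s: "0 \<le> s"
  have "s * \<bar>ax s\<bar> \<le> norm u * (s * (weight \<alpha> s * \<bar>a_ext s\<bar>))"
    using mult_left_mono[OF abs_ax_le s] by (simp add: mult_ac)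
  also have "\<dots> \<le> norm u * majorant s" by (intro mult_left_mono majorant_ge) auto
  finally show "\<bar>s * \<bar>ax s\<bar>\<bar> \<le> norm u * majorant s" using s by simp
qed simp

lemma green_integral_sol:
  assumes t: "0 \<le> t"
  shows "integral {0..} (\<lambda>s. green_kernel \<alpha> t s * a_ext s * sol s) = t powr \<alpha> * A - frac_conv (1+\<alpha>) ax t"
proof -
  have "((\<lambda>s. t powr \<alpha> * ax s - (max (t-s) 0) powr \<alpha> * ax s) has_integral t powr \<alpha> * A - frac_conv (1+\<alpha>) ax t) {0..}"
    using integrable_ax has_integral_truncated_powr_kernel[OF \<alpha>0 t continuous_on_ax]
    by (intro has_integral_diff has_integral_mult_right) (auto simp: A_def)
  moreover have "green_kernel \<alpha> t s * a_ext s * sol s = t powr \<alpha> * ax s - (max (t-s) 0) powr \<alpha> * ax s" for s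
    using t by (simp add: green_kernel_def ax_def left_diff_distrib)
  ultimately show ?thesis by (simp add: integral_unique)
qed

lemma sol_eq:
  assumes "0 \<le> t"
  shows "sol t = c + b * t powr \<alpha> + (t powr \<alpha> * A - frac_conv (1+\<alpha>) ax t) / Gamma (1 + \<alpha>)"
  using sol_eq_sol_op[of t] green_integral_sol[OF assms] assms by (simp add: sol_op_def)

lemma has_real_derivative_sol:
  assumes t: "0 < t"
  shows "(sol has_real_derivative sol_deriv t) (at t)"
proof -
  have pw: "((\<lambda>\<tau>. \<tau> powr \<alpha>) has_real_derivative \<alpha> * t powr (\<alpha>-1)) (at t)"
    by (rule has_real_derivative_powr[OF t])
  have d: "((\<lambda>\<tau>. c + b * \<tau> powr \<alpha> + (\<tau> powr \<alpha> * A - frac_conv (1+\<alpha>) ax \<tau>) / Gamma (1 + \<alpha>))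
      has_real_derivative 0 + b * (\<alpha> * t powr (\<alpha>-1))
        + (\<alpha> * t powr (\<alpha>-1) * A - \<alpha> * frac_conv \<alpha> ax t) / Gamma (1 + \<alpha>)) (at t)"
    by (rule DERIV_add[OF DERIV_add[OF DERIV_const DERIV_cmult[OF pw]] DERIV_cdivide[OF DERIV_diff[OF
          DERIV_cmult_right[OF pw] has_real_derivative_frac_conv_add_one[OF \<alpha>0 t continuous_on_ax]]]])
  have "Gamma \<alpha> \<noteq> 0" using Gamma_real_pos[OF \<alpha>0] by simp
  then have "0 + b * (\<alpha> * t powr (\<alpha>-1)) + (\<alpha> * t powr (\<alpha>-1) * A - \<alpha> * frac_conv \<alpha> ax t) / Gamma (1 + \<alpha>)
      = sol_deriv t"
    using Gamma_1_plus_real[OF \<alpha>0] \<alpha>0 by (simp add: sol_deriv_def D_def field_simps)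
  with d have "((\<lambda>\<tau>. c + b * \<tau> powr \<alpha> + (\<tau> powr \<alpha> * A - frac_conv (1+\<alpha>) ax \<tau>) / Gamma (1 + \<alpha>))
      has_real_derivative sol_deriv t) (at t)" by simp
  then show ?thesis
    by (rule has_field_derivative_transform_within_open[where S="{0<..}"])
       (use t in \<open>auto simp: sol_eq\<close>)
qed

lemma deriv_sol: "0 < t \<Longrightarrow> deriv sol t = sol_deriv t"
  by (rule DERIV_imp_deriv[OF has_real_derivative_sol])

text \<open>The order \<open>1-\<alpha>\<close> integral of \<open>t\<^sup>\<alpha>\<^sup>-\<^sup>1\<close> is constant, that of \<open>frac_conv \<alpha> ax\<close> is
  \<open>\<Gamma>(\<alpha>)\<Gamma>(1-\<alpha>) \<integral>\<^sub>0\<^sup>\<tau> ax\<close>.\<close>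

lemma has_integral_RL_integrand_sol:
  assumes \<tau>: "0 < \<tau>"
  shows "((\<lambda>s. deriv sol s / (\<tau>-s) powr \<alpha>) has_integral
      D * Gamma \<alpha> * Gamma (1-\<alpha>) - Gamma (1-\<alpha>) * integral {0..\<tau>} ax) {0..\<tau>}"
proof -
  have G: "Gamma \<alpha> \<noteq> 0" using Gamma_real_pos[OF \<alpha>0] by simp
  define f where "f u = D * ((\<tau>-u) powr (-\<alpha>) * u powr (\<alpha>-1)) - (1 / Gamma \<alpha>) * ((\<tau>-u) powr (-\<alpha>) * frac_conv \<alpha> ax u)"
    for u
  have "(f has_integral D * (Gamma \<alpha> * Gamma (1-\<alpha>)) - (1 / Gamma \<alpha>) * (Gamma \<alpha> * Gamma (1-\<alpha>) * integral {0..\<tau>} ax)) {0..\<tau>}"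
    unfolding f_def
    by (intro has_integral_diff has_integral_mult_right has_integral_powr_kernel_complementary
          has_integral_frac_conv_complementary \<alpha>0 \<alpha>1 \<tau> continuous_on_ax)
  also have "D * (Gamma \<alpha> * Gamma (1-\<alpha>)) - (1 / Gamma \<alpha>) * (Gamma \<alpha> * Gamma (1-\<alpha>) * integral {0..\<tau>} ax)
      = D * Gamma \<alpha> * Gamma (1-\<alpha>) - Gamma (1-\<alpha>) * integral {0..\<tau>} ax"
    using G by simp
  finally have fi: "(f has_integral D * Gamma \<alpha> * Gamma (1-\<alpha>) - Gamma (1-\<alpha>) * integral {0..\<tau>} ax) {0..\<tau>}" .
  have eq: "deriv sol u / (\<tau>-u) powr \<alpha> = f u" if "u \<in> {0..\<tau>} - {0, \<tau>}" for u
  proof -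
    have "(\<tau>-u) powr (-\<alpha>) = 1 / (\<tau>-u) powr \<alpha>" using that by (simp add: powr_minus_divide)
    then show ?thesis
      using that by (simp add: f_def deriv_sol sol_deriv_def diff_divide_distrib)
  qed
  show ?thesis
    by (rule has_integral_spike_finite[of "{0, \<tau>}", OF _ eq fi]) simp
qed

lemma has_real_derivative_RL_integral_part_sol:
  assumes t: "0 < t"
  shows "(RL_integral_part \<alpha> (deriv sol) has_real_derivative - Gamma (1-\<alpha>) * ax t) (at t)"
proof -
  have "((\<lambda>x. integral {0..x} ax) has_real_derivative ax t) (at t within {0..t+1})"
    by (rule integral_has_real_derivative) (use t continuous_on_ax in \<open>auto intro: continuous_on_subset\<close>)
  then have "((\<lambda>x. integral {0..x} ax) has_real_derivative ax t) (at t)"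
    using at_within_Icc_at[of 0 t "t+1"] t by simp
  from DERIV_diff[OF DERIV_const DERIV_cmult[OF this]]
  have d: "((\<lambda>x. D * Gamma \<alpha> * Gamma (1-\<alpha>) - Gamma (1-\<alpha>) * integral {0..x} ax)
      has_real_derivative - Gamma (1-\<alpha>) * ax t) (at t)" by simp
  have eq: "D * Gamma \<alpha> * Gamma (1-\<alpha>) - Gamma (1-\<alpha>) * integral {0..x} ax = RL_integral_part \<alpha> (deriv sol) x"
    if "x \<in> {0<..}" for x
    unfolding RL_integral_part_def using integral_unique[OF has_integral_RL_integrand_sol[of x]] that by simp
  show ?thesis
    by (rule has_field_derivative_transform_within_open[where S="{0<..}", OF d _ _ eq]) (use t in auto)
qed

lemma RL_deriv_sol:
  assumes "0 < t"
  shows "RL_deriv \<alpha> (deriv sol) t = - ax t"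
proof -
  have "0 < Gamma (1-\<alpha>)" by (rule Gamma_real_pos) (use \<alpha>1 in simp)
  then have "Gamma (1-\<alpha>) \<noteq> 0" by (metis less_irrefl)
  then show ?thesis
    unfolding RL_deriv_def using DERIV_imp_deriv[OF has_real_derivative_RL_integral_part_sol[OF assms]]
    by simp
qed

lemma tendsto_deriv_sol_at_right_0: "((\<lambda>t. t powr (1-\<alpha>) * deriv sol t) \<longlongrightarrow> D) (at_right 0)"
proof -
  have "Gamma \<alpha> \<noteq> 0" using Gamma_real_pos[OF \<alpha>0] by simp
  then have "((\<lambda>t. D - t powr (1-\<alpha>) * frac_conv \<alpha> ax t / Gamma \<alpha>) \<longlongrightarrow> D - 0 / Gamma \<alpha>) (at_right 0)"
    by (intro tendsto_intros tendsto_powr_frac_conv_at_right_0[OF \<alpha>0 continuous_on_ax])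
  moreover have "\<forall>\<^sub>F t in at_right 0. D - t powr (1-\<alpha>) * frac_conv \<alpha> ax t / Gamma \<alpha> = t powr (1-\<alpha>) * deriv sol t"
  proof (rule eventually_at_right_less[THEN eventually_mono])
    fix t :: real assume t: "0 < t"
    have "t powr (1-\<alpha>) * t powr (\<alpha>-1) = 1" using t powr_add[of t "1-\<alpha>" "\<alpha>-1"] by simp
    then show "D - t powr (1-\<alpha>) * frac_conv \<alpha> ax t / Gamma \<alpha> = t powr (1-\<alpha>) * deriv sol t"
      using t by (simp add: deriv_sol sol_deriv_def algebra_simps)
  qed
  ultimately show ?thesis by (simp add: Lim_transform_eventually)
qed

lemma RL_admissible_deriv_sol: "RL_admissible \<alpha> (deriv sol)"
  unfolding RL_admissible_def
proof (intro conjI allI impI exI)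
  have "continuous_on {0<..} sol_deriv"
    unfolding sol_deriv_def[abs_def] using Gamma_real_pos[OF \<alpha>0]
    by (intro continuous_intros continuous_on_powr' continuous_on_subset[OF continuous_on_frac_conv[OF \<alpha>0 continuous_on_ax]]) auto
  then show "continuous_on {0<..} (deriv sol)"
    by (rule continuous_on_eq) (auto simp: deriv_sol)
  show "((\<lambda>t. t powr (1-\<alpha>) * deriv sol t) \<longlongrightarrow> D) (at_right 0)"
    by (rule tendsto_deriv_sol_at_right_0)
  fix t :: real assume t: "0 < t"
  show "(\<lambda>s. deriv sol s / (t-s) powr \<alpha>) integrable_on {0..t}"
    using has_integral_RL_integrand_sol[OF t] by blast
  show "RL_integral_part \<alpha> (deriv sol) differentiable (at t)"
    using has_real_derivative_RL_integral_part_sol[OF t] by (auto intro: differentiableI has_field_derivative_imp_has_derivative)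
qed

lemma is_solution_sol: "is_solution \<alpha> a sol"
  unfolding is_solution_def
proof (intro conjI allI impI RL_admissible_deriv_sol)
  show "continuous_on {0..} sol" by (rule continuous_on_subset[OF continuous_on_sol]) auto
  fix t :: real assume t: "0 < t"
  show "sol differentiable (at t)"
    using has_real_derivative_sol[OF t] by (auto intro: differentiableI has_field_derivative_imp_has_derivative)
  show "RL_deriv \<alpha> (deriv sol) t + a t * sol t = 0"
    using RL_deriv_sol[OF t] t by (simp add: ax_def a_ext_eq)
qed

lemma abs_sol_remainder_le:
  assumes t: "0 < t"
  shows "\<bar>sol t - c - b * t powr \<alpha>\<bar> \<le> integral {0..} (\<lambda>s. s * \<bar>ax s\<bar>) / Gamma (1 + \<alpha>) * t powr (\<alpha>-1)"
proof -
  have "norm (integral {0..} (\<lambda>s. green_kernel \<alpha> t s * a_ext s * sol s))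
      \<le> integral {0..} (\<lambda>s. t powr (\<alpha>-1) * (s * \<bar>ax s\<bar>))"
  proof (rule integral_norm_bound_integral)
    show "(\<lambda>s. green_kernel \<alpha> t s * a_ext s * sol s) integrable_on {0..}"
      by (rule green_integrand_integrable[OF continuous_on_sol abs_sol_le])
    show "(\<lambda>s. t powr (\<alpha>-1) * (s * \<bar>ax s\<bar>)) integrable_on {0..}"
      by (rule integrable_on_mult_right[OF integrable_first_moment_ax])
    fix s :: real assume "s \<in> {0..}"
    then have s: "0 \<le> s" by simp
    have "norm (green_kernel \<alpha> t s * a_ext s * sol s) = green_kernel \<alpha> t s * \<bar>ax s\<bar>"
      using green_kernel_nonneg[OF \<alpha>0 \<alpha>1 s] by (simp add: ax_def abs_mult mult.assoc)
    also have "\<dots> \<le> s * t powr (\<alpha>-1) * \<bar>ax s\<bar>"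
      by (rule mult_right_mono[OF green_kernel_le_linear[OF \<alpha>0 \<alpha>1 t s]]) simp
    finally show "norm (green_kernel \<alpha> t s * a_ext s * sol s) \<le> t powr (\<alpha>-1) * (s * \<bar>ax s\<bar>)"
      by (simp add: algebra_simps)
  qed
  moreover have "sol t - c - b * t powr \<alpha> = integral {0..} (\<lambda>s. green_kernel \<alpha> t s * a_ext s * sol s) / Gamma (1 + \<alpha>)"
    using sol_eq_sol_op[of t] t by (simp add: sol_op_def)
  ultimately show ?thesis
    using Gamma_1_plus_\<alpha>_pos by (simp add: divide_right_mono abs_divide mult.commute)
qed

lemma sol_asymptotics:
  shows "(\<lambda>t. sol t - c - b * t powr \<alpha>) \<in> O[at_top](\<lambda>t. t powr (\<alpha> - 1))"
    and "((\<lambda>t. sol t - c - b * t powr \<alpha>) \<longlongrightarrow> 0) at_top"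
proof -
  define C where "C = integral {0..} (\<lambda>s. s * \<bar>ax s\<bar>) / Gamma (1 + \<alpha>)"
  have ev: "\<forall>\<^sub>F t in at_top. norm (sol t - c - b * t powr \<alpha>) \<le> C * t powr (\<alpha>-1)"
    using eventually_gt_at_top[of 0] by eventually_elim (use abs_sol_remainder_le in \<open>simp add: C_def\<close>)
  then show "(\<lambda>t. sol t - c - b * t powr \<alpha>) \<in> O[at_top](\<lambda>t. t powr (\<alpha> - 1))"
    by (intro bigoI[where c=C]) simp
  have "((\<lambda>t. t powr (\<alpha>-1)) \<longlongrightarrow> 0) at_top"
    by (rule tendsto_neg_powr) (use \<alpha>1 in \<open>auto intro: filterlim_ident\<close>)
  then have "((\<lambda>t. C * t powr (\<alpha>-1)) \<longlongrightarrow> 0) at_top"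
    by (auto intro: tendsto_mult_right_zero)
  with ev show "((\<lambda>t. sol t - c - b * t powr \<alpha>) \<longlongrightarrow> 0) at_top"
    by (rule Lim_null_comparison)
qed

end

theorem theorem1:
  fixes \<alpha> T k c b :: real and a :: "real \<Rightarrow> real"
  assumes "0 < \<alpha>" "\<alpha> < 1"
    and "continuous_on {0..} a"
    and "0 < T"
    and "(\<lambda>s. s powr (1 + \<alpha>) * \<bar>a s\<bar>) integrable_on {T..}"
    and "max 1 (T powr \<alpha>) / Gamma (1 + \<alpha>) *
           (integral {0..T} (\<lambda>s. \<bar>a s\<bar>) + integral {T..} (\<lambda>s. s powr \<alpha> * \<bar>a s\<bar>)) = k"
    and "k < 1"
    and "c\<^sup>2 + b\<^sup>2 > 0"
  shows "\<exists>x. is_solution \<alpha> a x \<and>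
           (\<lambda>t. x t - c - b * t powr \<alpha>) \<in> O[at_top](\<lambda>t. t powr (\<alpha> - 1)) \<and>
           ((\<lambda>t. x t - c - b * t powr \<alpha>) \<longlongrightarrow> 0) at_top"
proof -
  interpret fde_data \<alpha> T k a
    using assms by unfold_locales auto
  obtain u where "weighted_sol_op c b u = u"
    using weighted_sol_op_has_fixed_point by blast
  then interpret fde_fixed_point \<alpha> T k a c b u
    by unfold_locales
  show ?thesis
    using is_solution_sol sol_asymptotics by blast
qed

end
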